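(* Consider noiseless non-adaptive sensing $\bm{y} = \bm{A}\bm{x}$, where $\bm{x} \in \mathbb{R}^N$ is an arbitrary one-sparse signal whose single nonzero entry equals $\mu \neq 0$, and $\bm{A}$ is a binary ($\{0,1\}$-valued) $M \times N$ sensing matrix with $M = T\log_2(N)$ measurements, where $T \geq 1$ is a constant. Then any such binary sensing matrix $\bm{A}$ from which every such one-sparse $\bm{x}$ can be reconstructed from $\bm{y} = \bm{A}\bm{x}$ has $l_0$ cost $\|\bm{A}\|_{0,0} = \Theta(N\log_2(N))$ as $N \to \infty$.
   Context: For an $M\times N$ matrix $\bm{A} = [A_1 \cdots A_N]$ with columns $A_i$, the $l_0$ cost is $\|\bm{A}\|_{0,0} = \sum_{i=1}^N \|A_i\|_0 = \sum_{i=1}^N\sum_{j=1}^M \mathbb{I}(A(j,i)\neq 0)$, the number of nonzero entries. A signal is one-sparse if it has at most one nonzero entry. A non-adaptive strategy acquires all $M$ measurements at once with a fixed matrix $\bm{A}$ not chosen based on previous observations. $F(N) = \Theta(g(N))$ means there are positive constants $C_1, C_2$ with $C_1 g(N) \leq F(N) \leq C_2 g(N)$ for all sufficiently large $N$. *)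

theory Defs
  imports Complex_Main
begin

text \<open>An M x N matrix is represented as a function A :: nat => nat => real,
  A j i being the entry in row j < M and column i < N (other values irrelevant).
  Signals in R^N are functions x :: nat => real, entries with index >= N zero.\<close>

definition binary_matrix :: "nat \<Rightarrow> nat \<Rightarrow> (nat \<Rightarrow> nat \<Rightarrow> real) \<Rightarrow> bool" where
  "binary_matrix M N A \<longleftrightarrow> (\<forall>j<M. \<forall>i<N. A j i \<in> {0, 1})"

definition mat_vec :: "nat \<Rightarrow> (nat \<Rightarrow> nat \<Rightarrow> real) \<Rightarrow> (nat \<Rightarrow> real) \<Rightarrow> nat \<Rightarrow> real" where
  "mat_vec N A x j = (\<Sum>i<N. A j i * x i)"

definition l00_cost :: "nat \<Rightarrow> nat \<Rightarrow> (nat \<Rightarrow> nat \<Rightarrow> real) \<Rightarrow> nat" where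
  "l00_cost M N A = (\<Sum>i<N. card {j. j < M \<and> A j i \<noteq> 0})"

definition one_sparse_mu :: "nat \<Rightarrow> real \<Rightarrow> (nat \<Rightarrow> real) set" where
  "one_sparse_mu N \<mu> = {x. \<exists>k<N. x k = \<mu> \<and> (\<forall>i. i \<noteq> k \<longrightarrow> x i = 0)}"

definition recovers :: "nat \<Rightarrow> nat \<Rightarrow> real \<Rightarrow> (nat \<Rightarrow> nat \<Rightarrow> real) \<Rightarrow> bool" where
  "recovers M N \<mu> A \<longleftrightarrow>
     (\<forall>x\<in>one_sparse_mu N \<mu>. \<forall>x'\<in>one_sparse_mu N \<mu>.
        (\<forall>j<M. mat_vec N A x j = mat_vec N A x' j) \<longrightarrow> x = x')"

definition num_meas :: "real \<Rightarrow> nat \<Rightarrow> nat" where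
  "num_meas T N = nat \<lceil>T * log 2 (real N)\<rceil>"

end

theory Submission
  imports Defs
begin

text \<open>Testing \<open>A\<close> on the signals \<open>\<mu> e\<^sub>i\<close> shows that recovery forces the column supports
  \<open>S i \<subseteq> {..<M}\<close> of a binary matrix to be pairwise distinct. For \<open>0 < x\<close> this gives
  \<open>(\<Sum>i<N. x ^ card (S i)) \<le> (\<Sum>S\<in>Pow {..<M}. x ^ card S) = (1 + x) ^ M\<close>, while convexity of
  \<open>t \<mapsto> x powr t\<close> bounds the left side below by \<open>N * x powr (W / N)\<close>, \<open>W\<close> being the cost.
  Taking logarithms, \<open>ln N - W / N * ln (1 / x) \<le> M * x\<close>; with \<open>x = ln 2 / (2 * T)\<close> the right
  side is about \<open>ln N / 2\<close>, so \<open>W \<ge> N * ln N / (4 * ln (1 / x))\<close>. The upper bound is \<open>W \<le> N * M\<close>.\<close>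

lemma mult_powr_mean_le_sum_powr:
  fixes w :: "nat \<Rightarrow> real" and x :: real
  assumes "0 < x" "0 < N"
  shows "real N * x powr ((\<Sum>i<N. w i) / N) \<le> (\<Sum>i<N. x powr w i)"
proof -
  define a where "a = (\<Sum>i<N. w i) / N"
  have tangent: "x powr a * (1 + (w i - a) * ln x) \<le> x powr w i" for i
  proof -
    have "x powr w i = exp (a * ln x) * exp ((w i - a) * ln x)"
      using assms by (simp add: powr_def exp_add[symmetric] algebra_simps)
    also have "\<dots> \<ge> exp (a * ln x) * (1 + (w i - a) * ln x)"
      by (intro mult_left_mono) auto
    finally show ?thesis using assms by (simp add: powr_def)
  qed
  have "(\<Sum>i<N. x powr a * (1 + (w i - a) * ln x))
        = x powr a * (N + ln x * ((\<Sum>i<N. w i) - N * a))"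
    by (simp add: sum_distrib_left sum.distrib algebra_simps sum_subtractf)
  also have "\<dots> = x powr a * N"
    using assms by (simp add: a_def)
  moreover have "(\<Sum>i<N. x powr a * (1 + (w i - a) * ln x)) \<le> (\<Sum>i<N. x powr w i)"
    by (intro sum_mono tangent)
  ultimately have "x powr a * N \<le> (\<Sum>i<N. x powr w i)" by simp
  then show ?thesis by (simp add: a_def mult.commute)
qed

lemma sum_Pow_power_card:
  fixes x :: "'b :: comm_semiring_1"
  assumes "finite A"
  shows "(\<Sum>S\<in>Pow A. x ^ card S) = (x + 1) ^ card A"
  using prod_add[OF assms, of "\<lambda>_. x" "\<lambda>_. 1"] by simp

definition col_support :: "nat \<Rightarrow> (nat \<Rightarrow> nat \<Rightarrow> real) \<Rightarrow> nat \<Rightarrow> nat set" where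
  "col_support M A i = {j. j < M \<and> A j i \<noteq> 0}"

lemma l00_cost_eq_sum_card_col_support:
  "l00_cost M N A = (\<Sum>i<N. card (col_support M A i))"
  by (simp add: l00_cost_def col_support_def)

lemma col_support_subset: "col_support M A i \<subseteq> {..<M}"
  by (auto simp: col_support_def)

lemma l00_cost_le_mult: "l00_cost M N A \<le> N * M"
proof -
  have "card (col_support M A i) \<le> M" for i
    using card_mono[OF _ col_support_subset] by fastforce
  then show ?thesis
    unfolding l00_cost_eq_sum_card_col_support
    using sum_mono[of "{..<N}" "\<lambda>i. card (col_support M A i)" "\<lambda>_. M"] by simp
qed

lemma mat_vec_one_sparse:
  assumes "k < N"
  shows "mat_vec N A (\<lambda>i. if i = k then \<mu> else 0) j = A j k * \<mu>"
  using assms by (simp add: mat_vec_def if_distrib cong: if_cong)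

lemma inj_on_col_support:
  assumes "binary_matrix M N A" "recovers M N \<mu> A" "\<mu> \<noteq> 0"
  shows "inj_on (col_support M A) {..<N}"
proof (rule inj_onI)
  fix k l assume k: "k \<in> {..<N}" and l: "l \<in> {..<N}"
    and same_support: "col_support M A k = col_support M A l"
  define e where "e m = (\<lambda>i::nat. if i = m then \<mu> else 0)" for m
  have same_column: "A j k = A j l" if "j < M" for j
  proof -
    have "A j k \<in> {0, 1}" "A j l \<in> {0, 1}"
      using assms(1) that k l by (auto simp: binary_matrix_def)
    moreover have "A j k \<noteq> 0 \<longleftrightarrow> A j l \<noteq> 0"
      using same_support that by (auto simp: col_support_def set_eq_iff)
    ultimately show ?thesis by auto
  qed
  have "e m \<in> one_sparse_mu N \<mu>" if "m < N" for m
    using that by (auto simp: e_def one_sparse_mu_def)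
  moreover have "\<forall>j<M. mat_vec N A (e k) j = mat_vec N A (e l) j"
    using k l same_column by (simp add: e_def mat_vec_one_sparse)
  ultimately have "e k = e l"
    using assms(2) k l by (auto simp: recovers_def)
  then have "e k k = e l k" by simp
  then show "k = l" using assms(3) by (auto simp: e_def split: if_splits)
qed

lemma sum_power_card_col_support_le:
  fixes x :: real
  assumes "inj_on (col_support M A) {..<N}" "0 \<le> x"
  shows "(\<Sum>i<N. x ^ card (col_support M A i)) \<le> (1 + x) ^ M"
proof -
  have "(\<Sum>i<N. x ^ card (col_support M A i)) = (\<Sum>S\<in>col_support M A ` {..<N}. x ^ card S)"
    by (simp add: sum.reindex[OF assms(1)])
  also have "\<dots> \<le> (\<Sum>S\<in>Pow {..<M}. x ^ card S)"
    using assms(2) col_support_subset by (intro sum_mono2) auto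
  also have "\<dots> = (1 + x) ^ M"
    using sum_Pow_power_card[of "{..<M}" x] by (simp add: add.commute)
  finally show ?thesis .
qed

lemma ln_le_l00_cost_bound:
  fixes x :: real
  assumes "binary_matrix M N A" "recovers M N \<mu> A" "\<mu> \<noteq> 0" "0 < x" "0 < N"
  shows "ln N + l00_cost M N A / N * ln x \<le> M * x"
proof -
  define W where "W = real (l00_cost M N A)"
  have "real N * x powr (W / N) \<le> (\<Sum>i<N. x powr real (card (col_support M A i)))"
    using mult_powr_mean_le_sum_powr[OF assms(4,5), of "\<lambda>i. real (card (col_support M A i))"]
    by (simp add: W_def l00_cost_eq_sum_card_col_support)
  also have "\<dots> = (\<Sum>i<N. x ^ card (col_support M A i))"
    using assms(4) by (simp add: powr_realpow)
  also have "\<dots> \<le> (1 + x) ^ M"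
    using sum_power_card_col_support_le[OF inj_on_col_support[OF assms(1-3)]] assms(4) by simp
  finally have "ln (real N * x powr (W / N)) \<le> ln ((1 + x) ^ M)"
    using assms(4,5) by simp
  then have "ln N + W / N * ln x \<le> M * ln (1 + x)"
    using assms(4,5) by (simp add: ln_mult ln_powr ln_realpow)
  also have "\<dots> \<le> M * x"
    using assms(4) by (intro mult_left_mono ln_add_one_self_le_self) auto
  finally show ?thesis by (simp add: W_def)
qed

lemma num_meas_le:
  assumes "0 \<le> T * log 2 N"
  shows "real (num_meas T N) \<le> T * log 2 N + 1"
  using assms of_int_ceiling_le_add_one[of "T * log 2 N"] by (simp add: num_meas_def)

lemma l00_cost_upper_bound:
  assumes "1 \<le> T * log 2 N"
  shows "real (l00_cost (num_meas T N) N A) \<le> 2 * T * real N * log 2 N"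
proof -
  have "real (l00_cost (num_meas T N) N A) \<le> real N * real (num_meas T N)"
    using l00_cost_le_mult by (metis of_nat_le_iff of_nat_mult)
  also have "\<dots> \<le> real N * (T * log 2 N + 1)"
    using num_meas_le assms by (intro mult_left_mono) auto
  also have "\<dots> \<le> real N * (2 * T * log 2 N)"
    using assms by (intro mult_left_mono) auto
  finally show ?thesis by (simp add: algebra_simps)
qed

lemma l00_cost_lower_bound:
  assumes "1 \<le> T" "\<mu> \<noteq> 0" "4 \<le> ln N"
    and "binary_matrix (num_meas T N) N A" "recovers (num_meas T N) N \<mu> A"
  shows "real N * ln N \<le> 4 * ln (2 * T / ln 2) * real (l00_cost (num_meas T N) N A)"
proof -
  define x where "x = ln 2 / (2 * T)"
  define W where "W = real (l00_cost (num_meas T N) N A)"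
  have N: "0 < N" using assms(3) by (cases "N = 0") auto
  have x: "0 < x" "x < 1"
    using assms(1) ln_2_less_1 by (auto simp: x_def field_simps)
  have "0 \<le> T * log 2 N"
    using assms(1,3) by (simp add: log_def)
  then have "real (num_meas T N) * x \<le> (T * log 2 N + 1) * x"
    using num_meas_le x by (intro mult_right_mono) auto
  also have "\<dots> = ln N / 2 + x"
    using assms(1) by (simp add: x_def log_def field_simps)
  finally have "ln N + W / N * ln x \<le> ln N / 2 + 1"
    using ln_le_l00_cost_bound[OF assms(4,5,2) x(1) N] x by (simp add: W_def)
  moreover have "ln x = - ln (2 * T / ln 2)"
    using assms(1) by (simp add: x_def ln_div)
  ultimately have "ln N / 4 \<le> W / N * ln (2 * T / ln 2)"
    using assms(3) by simp
  then show ?thesis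
    using N by (simp add: W_def field_simps)
qed

theorem theorem1:
  fixes T \<mu> :: real
  assumes "T \<ge> 1" and "\<mu> \<noteq> 0"
  shows "\<exists>C1>0. \<exists>C2>0. \<exists>N0::nat. \<forall>N\<ge>N0. \<forall>A.
           binary_matrix (num_meas T N) N A \<and> recovers (num_meas T N) N \<mu> A \<longrightarrow>
             C1 * real N * log 2 (real N) \<le> real (l00_cost (num_meas T N) N A) \<and>
             real (l00_cost (num_meas T N) N A) \<le> C2 * real N * log 2 (real N)"
proof (intro exI conjI allI impI)
  define L where "L = ln (2 * T / ln 2)"
  have "0 < L"
    using assms(1) ln_2_less_1 by (simp add: L_def field_simps)
  then show "0 < ln 2 / (4 * L)" by simp
  show "0 < 2 * T" using assms(1) by simp
  fix N :: nat and A
  assume "nat \<lceil>exp (4::real)\<rceil> \<le> N"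
    and A: "binary_matrix (num_meas T N) N A \<and> recovers (num_meas T N) N \<mu> A"
  then have "exp 4 \<le> real N" by linarith
  then have lnN: "4 \<le> ln N"
    using ln_mono[of "exp 4" "real N"] by simp
  show "ln 2 / (4 * L) * real N * log 2 N \<le> real (l00_cost (num_meas T N) N A)"
    using l00_cost_lower_bound[OF assms lnN] A \<open>0 < L\<close>
    by (simp add: L_def log_def field_simps)
  have "ln 2 \<le> T * ln N"
    using mult_right_mono[of 1 T "ln N"] assms(1) lnN ln_2_less_1 by linarith
  then have "1 \<le> T * log 2 N"
    by (simp add: log_def field_simps)
  then show "real (l00_cost (num_meas T N) N A) \<le> 2 * T * real N * log 2 N"
    by (rule l00_cost_upper_bound)
qed

end
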